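(* Let $K\subseteq\mathbb{R}^n$ be a closed convex set of dimension at least $2$, and let $O\in\partial K$. Then $\mathrm{CR}(O)\geq \mathrm{LCD}(O)$.
   Context: For $r>0$, $S_r(O)\subseteq\mathbb{R}^n$ denotes the Euclidean sphere of radius $r$ centered at $O$. The connectivity radius $\mathrm{CR}(O)$ is the supremum of all $\epsilon$ such that for every $0<r<\epsilon$ the intersection $S_r(O)\cap K$ is connected. A point $P\in\partial K\setminus\{O\}$ is called $O$-critical if $\langle O-P, X-P\rangle\geq 0$ for all $X\in K$ (equivalently, the affine hyperplane through $P$ orthogonal to the segment $OP$ is a supporting hyperplane of $K$). The least critical distance $\mathrm{LCD}(O)$ is the infimum of $|OP|$ over all $O$-critical points $P\in\partial K$. *)

theory Defs
  imports "HOL-Analysis.Analysis"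
begin

definition conn_radius :: "'a::euclidean_space set \<Rightarrow> 'a \<Rightarrow> ereal" where
  "conn_radius K O0 = Sup {ereal \<epsilon> | \<epsilon>::real.
      \<forall>r. 0 < r \<and> r < \<epsilon> \<longrightarrow> connected (sphere O0 r \<inter> K)}"

definition critical_point :: "'a::euclidean_space set \<Rightarrow> 'a \<Rightarrow> 'a \<Rightarrow> bool" where
  "critical_point K O0 P \<longleftrightarrow> P \<in> frontier K \<and> P \<noteq> O0 \<and>
      (\<forall>X\<in>K. inner (O0 - P) (X - P) \<ge> 0)"

text \<open>Least critical distance (infimum over the empty set is +\<infinity>).\<close>
definition least_crit_dist :: "'a::euclidean_space set \<Rightarrow> 'a \<Rightarrow> ereal" where
  "least_crit_dist K O0 = Inf {ereal (dist O0 P) | P. critical_point K O0 P}"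

end

theory Submission
  imports Defs
begin

text \<open>
  Let B = K \<inter> cball O0 r and let f send p to the point of B nearest to its outward
  reflection p + (p - O0). Then f is continuous, fixes K \<inter> sphere O0 r, never decreases the
  distance to O0, and a point p with 0 < dist p O0 < r that f does not move is O0-critical:
  the hyperplane through p orthogonal to O0 p supports B, hence K. So for r below the least
  critical distance, f strictly increases the distance to O0 on the punctured ball, uniformly on
  compact sub-annuli. As dim K \<ge> 2, K contains two non-parallel directions at O0; joining each
  point of K \<inter> sphere O0 r by a segment to a suitable one of them gives a connected set
  G \<subseteq> B that contains the sphere section and avoids a neighbourhood of O0. The iterates
  of G under f are connected, contain the sphere section and are pushed onto it, so the sphere
  section is the \<omega>-limit set of G, a decreasing intersection of continua, and hence
  connected.
\<close>

lemma convex_mem_towards: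
  assumes "convex K" "O0 \<in> K" "q \<in> K" "0 \<le> t" "t \<le> 1"
  shows "O0 + t *\<^sub>R (q - O0) \<in> K"
  using convexD_alt[OF assms] by (simp add: algebra_simps)

lemma sum_squares_minus_cross_ge:
  fixes a b l n :: real
  assumes "0 \<le> l" "l \<le> 1" "0 \<le> n" "n \<le> a + b"
  shows "(1 - l) * n\<^sup>2 / 2 \<le> a\<^sup>2 + b\<^sup>2 - 2 * l * a * b"
proof -
  have "n\<^sup>2 \<le> (a + b)\<^sup>2"
    using assms(3,4) by (simp add: power_mono)
  also have "\<dots> \<le> 2 * (a\<^sup>2 + b\<^sup>2)"
    using zero_le_power2[of "a - b"] by (simp add: power2_eq_square algebra_simps)
  finally have "(1 - l) * n\<^sup>2 \<le> (1 - l) * (2 * (a\<^sup>2 + b\<^sup>2))"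
    using assms(2) by (intro mult_left_mono) auto
  then have "(1 - l) * n\<^sup>2 / 2 \<le> (1 - l) * (a\<^sup>2 + b\<^sup>2)"
    by (simp only: mult.left_commute[of "1 - l" 2])
  moreover have "a\<^sup>2 + b\<^sup>2 - 2 * l * a * b = (1 - l) * (a\<^sup>2 + b\<^sup>2) + l * (a - b)\<^sup>2"
    by (simp add: power2_eq_square algebra_simps)
  moreover have "0 \<le> l * (a - b)\<^sup>2"
    using assms(1) by simp
  ultimately show ?thesis
    by linarith
qed

lemma dist_closed_segment_lower_bound:
  fixes O0 u v :: "'a::real_inner"
  assumes "x \<in> closed_segment (O0 + v) (O0 + u)" and "norm u \<le> norm v"
    and "0 \<le> \<kappa>" and "\<kappa> < norm v * norm u" and "- \<kappa> \<le> inner v u"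
  shows "(1 - \<kappa> / (norm v * norm u)) * (norm u)\<^sup>2 / 2 \<le> (dist x O0)\<^sup>2"
proof -
  obtain t where t: "0 \<le> t" "t \<le> 1" and "x = (1 - t) *\<^sub>R (O0 + v) + t *\<^sub>R (O0 + u)"
    using assms(1) unfolding closed_segment_def by blast
  then have x: "x - O0 = (1 - t) *\<^sub>R v + t *\<^sub>R u"
    by (simp add: algebra_simps)
  define a where "a = (1 - t) * norm v"
  define b where "b = t * norm u"
  define l where "l = \<kappa> / (norm v * norm u)"
  have l: "0 \<le> l" "l < 1" "\<kappa> = l * (norm v * norm u)"
    using assms(3,4) by (auto simp: l_def field_simps)
  have "(1 - l) * (norm u)\<^sup>2 / 2 \<le> a\<^sup>2 + b\<^sup>2 - 2 * l * a * b"
  proof (rule sum_squares_minus_cross_ge)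
    show "norm u \<le> a + b"
      using t mult_left_mono[OF assms(2), of "1 - t"] by (simp add: a_def b_def algebra_simps)
  qed (use l in auto)
  also have "\<dots> \<le> a\<^sup>2 + b\<^sup>2 + 2 * ((1 - t) * t) * inner v u"
  proof -
    have "((1 - t) * t) * (- \<kappa>) \<le> ((1 - t) * t) * inner v u"
      using t assms(5) by (intro mult_left_mono) auto
    moreover have "((1 - t) * t) * (- \<kappa>) = - (l * a * b)"
      by (simp add: l(3) a_def b_def)
    ultimately show ?thesis
      by linarith
  qed
  also have "\<dots> = (1 - t)\<^sup>2 * inner v v + t\<^sup>2 * inner u u + 2 * ((1 - t) * t) * inner v u"
    by (simp add: a_def b_def power_mult_distrib flip: power2_norm_eq_inner)
  also have "\<dots> = (dist x O0)\<^sup>2"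
    unfolding dist_norm power2_norm_eq_inner x
    by (simp add: inner_add_left inner_add_right inner_commute power2_eq_square algebra_simps)
  finally show ?thesis
    by (simp add: l_def)
qed

lemma norm_add_less_if_abs_inner_less:
  fixes u1 u2 :: "'a::real_inner"
  assumes "norm u1 = s" "norm u2 = s" "\<bar>inner u1 u2\<bar> < s * s"
  shows "norm (u1 + u2) < 2 * s"
proof -
  have "(norm (u1 + u2))\<^sup>2 = (norm u1)\<^sup>2 + (norm u2)\<^sup>2 + 2 * inner u1 u2"
    unfolding power2_norm_eq_inner by (simp add: inner_add_left inner_add_right inner_commute)
  also have "\<dots> < (2 * s)\<^sup>2"
    using assms by (simp add: power2_eq_square)
  finally show ?thesis
    by (rule power_less_imp_less_base) (simp add: assms(1)[symmetric])
qed

lemma inner_ge_one_of_two: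
  fixes x u1 u2 :: "'a::real_inner"
  shows "- (norm x * norm (u1 + u2) / 2) \<le> inner x u1 \<or> - (norm x * norm (u1 + u2) / 2) \<le> inner x u2"
proof (rule ccontr)
  assume "\<not> ?thesis"
  then have "inner x (u1 + u2) < - (norm x * norm (u1 + u2))"
    by (simp add: inner_add_right)
  then show False
    using Cauchy_Schwarz_ineq2[of x "u1 + u2"] by simp
qed

lemma segments_to_two_points:
  fixes c1 c2 :: "'a::real_normed_vector"
  assumes "\<And>a. a \<in> A \<Longrightarrow> c a \<in> {c1, c2}"
  shows "connected (\<Union>a\<in>A. closed_segment a (c a) \<union> closed_segment c1 c2)"
    and "convex C \<Longrightarrow> A \<subseteq> C \<Longrightarrow> c1 \<in> C \<Longrightarrow> c2 \<in> C
          \<Longrightarrow> (\<Union>a\<in>A. closed_segment a (c a) \<union> closed_segment c1 c2) \<subseteq> C"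
proof -
  show "connected (\<Union>a\<in>A. closed_segment a (c a) \<union> closed_segment c1 c2)"
  proof (rule connected_Union)
    show "connected T" if T_in: "T \<in> (\<lambda>a. closed_segment a (c a) \<union> closed_segment c1 c2) ` A" for T
    proof -
      obtain a where "a \<in> A" and T: "T = closed_segment a (c a) \<union> closed_segment c1 c2"
        using T_in by blast
      then have "c a \<in> closed_segment a (c a) \<inter> closed_segment c1 c2"
        using assms by auto
      then show ?thesis
        unfolding T by (intro connected_Un) auto
    qed
    have "c1 \<in> \<Inter> ((\<lambda>a. closed_segment a (c a) \<union> closed_segment c1 c2) ` A)"
      by simp
    then show "\<Inter> ((\<lambda>a. closed_segment a (c a) \<union> closed_segment c1 c2) ` A) \<noteq> {}"
      by blast
  qed
  assume C: "convex C" "A \<subseteq> C" "c1 \<in> C" "c2 \<in> C"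
  show "(\<Union>a\<in>A. closed_segment a (c a) \<union> closed_segment c1 c2) \<subseteq> C"
  proof (intro UN_least Un_least)
    fix a assume "a \<in> A"
    then have "a \<in> C" "c a \<in> C"
      using C assms by auto
    then show "closed_segment a (c a) \<subseteq> C"
      using closed_segment_subset C(1) by metis
    show "closed_segment c1 c2 \<subseteq> C"
      using closed_segment_subset[OF C(3,4,1)] .
  qed
qed

lemma convex_obtain_noncollinear_directions:
  fixes K :: "'a::euclidean_space set"
  assumes "convex K" "O0 \<in> K" "aff_dim K \<ge> 2" "0 < r"
  obtains s u1 u2 where "0 < s" "s \<le> r" "norm u1 = s" "norm u2 = s"
    "O0 + u1 \<in> K" "O0 + u2 \<in> K" "\<bar>inner u1 u2\<bar> < s * s"
proof -
  have "\<not> collinear K"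
    using assms(3) by (simp add: collinear_aff_dim)
  then obtain b where b: "b \<in> K" "b \<noteq> O0"
    using collinear_subset[of "{O0}" K] by auto
  have "insert b (insert O0 K) = K"
    using b(1) assms(2) by auto
  then obtain x where x: "x \<in> K" "\<not> collinear {b, O0, x}"
    using collinear_triples[OF b(2), of K] \<open>\<not> collinear K\<close> by auto
  define v where "v = b - O0"
  define w where "w = x - O0"
  have vw: "\<not> collinear {0, v, w}"
    using x(2) by (simp add: collinear_3 v_def w_def)
  then have "v \<noteq> 0" "w \<noteq> 0"
    by (auto simp: insert_commute)
  define s where "s = min r (min (norm v) (norm w))"
  define u1 where "u1 = (s / norm v) *\<^sub>R v"
  define u2 where "u2 = (s / norm w) *\<^sub>R w"
  have s: "0 < s" "s \<le> r" "s \<le> norm v" "s \<le> norm w"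
    using assms(4) \<open>v \<noteq> 0\<close> \<open>w \<noteq> 0\<close> by (auto simp: s_def)
  have norms: "norm u1 = s" "norm u2 = s"
    using s \<open>v \<noteq> 0\<close> \<open>w \<noteq> 0\<close> by (auto simp: u1_def u2_def)
  have "O0 + u1 \<in> K" "O0 + u2 \<in> K"
    using convex_mem_towards[OF assms(1,2) b(1), of "s / norm v"]
      convex_mem_towards[OF assms(1,2) x(1), of "s / norm w"] s
    by (auto simp: u1_def u2_def v_def w_def divide_le_eq_1)
  moreover have "\<bar>inner u1 u2\<bar> < s * s"
  proof -
    have "\<not> collinear {0, u1, u2}"
      using vw s \<open>v \<noteq> 0\<close> \<open>w \<noteq> 0\<close> by (simp add: u1_def u2_def collinear_scaleR_iff)
    then have "\<bar>inner u1 u2\<bar> \<noteq> norm u1 * norm u2"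
      by (simp add: norm_cauchy_schwarz_equal)
    then show ?thesis
      using Cauchy_Schwarz_ineq2[of u1 u2] norms by simp
  qed
  ultimately show thesis
    using that s norms by blast
qed

lemma convex_obtain_connected_cover_of_sphere_Int:
  fixes K :: "'a::euclidean_space set"
  assumes "convex K" "O0 \<in> K" "aff_dim K \<ge> 2" "0 < r"
  obtains G \<epsilon> where "connected G" "G \<subseteq> K \<inter> cball O0 r" "K \<inter> sphere O0 r \<subseteq> G"
    "0 < \<epsilon>" "\<And>g. g \<in> G \<Longrightarrow> \<epsilon> \<le> dist g O0"
proof -
  obtain s u1 u2 where s: "0 < s" "s \<le> r" and norms: "norm u1 = s" "norm u2 = s"
    and inK: "O0 + u1 \<in> K" "O0 + u2 \<in> K" and nonparallel: "\<bar>inner u1 u2\<bar> < s * s"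
    using convex_obtain_noncollinear_directions[OF assms] by blast
  define \<kappa> where "\<kappa> = r * norm (u1 + u2) / 2"
  have \<kappa>: "0 \<le> \<kappa>" "\<kappa> < r * s"
    using norm_add_less_if_abs_inner_less[OF norms nonparallel] assms(4) by (auto simp: \<kappa>_def)
  \<comment> \<open>As \<kappa> < r * s, the angle between a - O0 and c a is bounded away from \<pi>, so the
    segment from a to O0 + c a keeps a positive distance from O0.\<close>
  define c where "c a = (if - \<kappa> \<le> inner (a - O0) u1 then u1 else u2)" for a
  have c: "norm (c a) = s" "O0 + c a \<in> {O0 + u1, O0 + u2}" for a
    using norms by (auto simp: c_def)
  have towards_c: "- \<kappa> \<le> inner (a - O0) (c a)" if "a \<in> sphere O0 r" for a
    using inner_ge_one_of_two[of "a - O0" u1 u2] that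
    by (auto simp: c_def \<kappa>_def dist_norm norm_minus_commute)
  define G where "G = (\<Union>a\<in>K \<inter> sphere O0 r.
    closed_segment a (O0 + c a) \<union> closed_segment (O0 + u1) (O0 + u2))"
  have "connected G"
    unfolding G_def using c(2) by (rule segments_to_two_points(1))
  moreover have "G \<subseteq> K \<inter> cball O0 r"
    unfolding G_def using c(2)
    by (rule segments_to_two_points(2)) (use assms(1) inK norms s in \<open>auto simp: convex_Int dist_norm\<close>)
  moreover have "K \<inter> sphere O0 r \<subseteq> G"
    by (auto simp: G_def)
  moreover
  define e where "e = min ((1 - \<kappa> / (r * s)) * s\<^sup>2 / 2) ((1 - \<bar>inner u1 u2\<bar> / (s * s)) * s\<^sup>2 / 2)"
  have "0 < e"
    using \<kappa> nonparallel s assms(4) by (simp add: e_def)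
  moreover have "sqrt e \<le> dist g O0" if "g \<in> G" for g
  proof -
    have "e \<le> (dist g O0)\<^sup>2"
      using that unfolding G_def
    proof (elim UN_E UnE)
      fix a assume a: "a \<in> K \<inter> sphere O0 r" and "g \<in> closed_segment a (O0 + c a)"
      then have "g \<in> closed_segment (O0 + (a - O0)) (O0 + c a)" and "norm (a - O0) = r"
        by (simp_all add: dist_norm norm_minus_commute)
      then show ?thesis
        using dist_closed_segment_lower_bound[of g O0 "a - O0" "c a" \<kappa>] towards_c a c \<kappa> s
        by (simp add: e_def min_le_iff_disj)
    next
      assume "g \<in> closed_segment (O0 + u1) (O0 + u2)"
      then show ?thesis
        using dist_closed_segment_lower_bound[of g O0 u1 u2 "\<bar>inner u1 u2\<bar>"] norms nonparallel
        by (simp add: e_def min_le_iff_disj)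
    qed
    then show ?thesis
      by (simp add: real_le_lsqrt)
  qed
  ultimately show thesis
    using that by (metis real_sqrt_gt_zero)
qed

lemma funpow_image_subset: "f ` S \<subseteq> S \<Longrightarrow> (f ^^ n) ` S \<subseteq> S"
  by (induction n) auto

lemma funpow_fixpoint: "f x = x \<Longrightarrow> (f ^^ n) x = x"
  by (induction n) auto

lemma continuous_on_funpow:
  assumes "continuous_on S f" "f ` S \<subseteq> S"
  shows "continuous_on S (f ^^ n)"
proof (induction n)
  case 0
  then show ?case
    by (simp add: continuous_on_id)
next
  case (Suc n)
  then show ?case
    using continuous_on_compose2[OF assms(1) Suc funpow_image_subset[OF assms(2)]] by simp
qed

lemma funpow_progress:
  fixes \<phi> :: "'a \<Rightarrow> real"
  assumes "f ` S \<subseteq> S" and mono: "\<And>p. p \<in> S \<Longrightarrow> \<phi> p \<le> \<phi> (f p)"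
    and step: "\<And>p. p \<in> S \<Longrightarrow> \<epsilon> \<le> \<phi> p \<Longrightarrow> \<phi> p \<le> b \<Longrightarrow> \<phi> p + c \<le> \<phi> (f p)"
    and "0 \<le> c" "p \<in> S" "\<epsilon> \<le> \<phi> p"
  shows "min b (\<phi> p + real n * c) \<le> \<phi> ((f ^^ n) p)"
proof (induction n)
  case (Suc n)
  define q where "q = (f ^^ n) p"
  have "q \<in> S"
    using funpow_image_subset[OF assms(1)] assms(5) by (auto simp: q_def)
  show ?case
  proof (cases "b \<le> \<phi> q")
    case True
    then show ?thesis
      using mono[OF \<open>q \<in> S\<close>] by (simp add: q_def)
  next
    case False
    then have "\<phi> p + real n * c \<le> \<phi> q"
      using Suc.IH by (simp add: q_def)
    moreover have "0 \<le> real n * c"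
      using assms(4) by simp
    ultimately have "\<epsilon> \<le> \<phi> q"
      using assms(6) by linarith
    then have "\<phi> q + c \<le> \<phi> (f q)"
      using step[OF \<open>q \<in> S\<close>] False by simp
    with \<open>\<phi> p + real n * c \<le> \<phi> q\<close> have "\<phi> p + real (Suc n) * c \<le> \<phi> (f q)"
      by (simp add: algebra_simps)
    then show ?thesis
      by (simp add: q_def)
  qed
qed simp

lemma funpow_eventually_ge_if_increasing:
  fixes f :: "'a::t2_space \<Rightarrow> 'a" and \<phi> :: "'a \<Rightarrow> real"
  assumes "compact S" "continuous_on S f" "f ` S \<subseteq> S" "continuous_on S \<phi>"
    and mono: "\<And>p. p \<in> S \<Longrightarrow> \<phi> p \<le> \<phi> (f p)"
    and strict: "\<And>p. p \<in> S \<Longrightarrow> \<epsilon> \<le> \<phi> p \<Longrightarrow> \<phi> p < r \<Longrightarrow> \<phi> p < \<phi> (f p)"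
    and "b < r"
  obtains N where "\<And>n p. N \<le> n \<Longrightarrow> p \<in> S \<Longrightarrow> \<epsilon> \<le> \<phi> p \<Longrightarrow> b \<le> \<phi> ((f ^^ n) p)"
proof -
  define Q where "Q = S \<inter> \<phi> -` {\<epsilon>..b}"
  have "compact Q"
  proof -
    have "closed Q"
      unfolding Q_def using assms(1,4) by (intro continuous_closed_preimage) (auto intro: compact_imp_closed)
    then show ?thesis
      using compact_Int_closed[OF assms(1)] by (metis Q_def inf.absorb2 inf_le1)
  qed
  obtain c where c: "0 < c" "\<And>p. p \<in> Q \<Longrightarrow> \<phi> p + c \<le> \<phi> (f p)"
  proof (cases "Q = {}")
    case False
    have "continuous_on Q (\<lambda>p. \<phi> (f p) - \<phi> p)"
      using assms(2-4) by (intro continuous_intros continuous_on_compose2[of S \<phi> Q f])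
        (auto simp: Q_def intro: continuous_on_subset)
    then obtain p0 where "p0 \<in> Q" "\<And>p. p \<in> Q \<Longrightarrow> \<phi> (f p0) - \<phi> p0 \<le> \<phi> (f p) - \<phi> p"
      using continuous_attains_inf[OF \<open>compact Q\<close> False] by blast
    moreover have "\<phi> p0 < \<phi> (f p0)"
      using strict \<open>p0 \<in> Q\<close> \<open>b < r\<close> by (auto simp: Q_def)
    ultimately show thesis
      using that[of "\<phi> (f p0) - \<phi> p0"] by force
  qed (use that[of 1] in auto)
  obtain N where N: "b - \<epsilon> < real N * c"
    using ex_less_of_nat_mult[OF c(1)] by blast
  show thesis
  proof (rule that)
    fix n p assume "N \<le> n" "p \<in> S" "\<epsilon> \<le> \<phi> p"
    moreover have "min b (\<phi> p + real n * c) \<le> \<phi> ((f ^^ n) p)"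
      using c \<open>p \<in> S\<close> \<open>\<epsilon> \<le> \<phi> p\<close>
      by (intro funpow_progress[of f S \<phi> \<epsilon> b c, OF assms(3) mono]) (auto simp: Q_def)
    moreover have "real N * c \<le> real n * c"
      using \<open>N \<le> n\<close> c(1) by simp
    ultimately show "b \<le> \<phi> ((f ^^ n) p)"
      using N by linarith
  qed
qed

definition omega_limit :: "('a::topological_space \<Rightarrow> 'a) \<Rightarrow> 'a set \<Rightarrow> 'a set" where
  "omega_limit f G = (\<Inter>k. closure (\<Union>n\<in>{k..}. (f ^^ n) ` G))"

lemma omega_limit_subset_closed:
  assumes "closed F" "\<And>n g. N \<le> n \<Longrightarrow> g \<in> G \<Longrightarrow> (f ^^ n) g \<in> F"
  shows "omega_limit f G \<subseteq> F"
proof -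
  have "closure (\<Union>n\<in>{N..}. (f ^^ n) ` G) \<subseteq> F"
    using assms by (intro closure_minimal) auto
  then show ?thesis
    unfolding omega_limit_def by blast
qed

lemma fixpoints_subset_omega_limit:
  assumes "A \<subseteq> G" "\<And>a. a \<in> A \<Longrightarrow> f a = a"
  shows "A \<subseteq> omega_limit f G"
proof
  fix a assume "a \<in> A"
  then have "a \<in> (\<Union>n\<in>{k..}. (f ^^ n) ` G)" for k
    using assms funpow_fixpoint[of f a k] by (metis UN_iff atLeast_iff image_eqI order_refl subsetD)
  then show "a \<in> omega_limit f G"
    unfolding omega_limit_def using closure_subset by blast
qed

lemma connected_omega_limit:
  fixes f :: "'a::euclidean_space \<Rightarrow> 'a"
  assumes "bounded S" "continuous_on S f" "f ` S \<subseteq> S"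
    and "connected G" "G \<subseteq> S" "a \<in> G" "f a = a"
  shows "connected (omega_limit f G)"
  unfolding omega_limit_def
proof (rule connected_nest)
  have orbit_subset: "(\<Union>n\<in>{k..}. (f ^^ n) ` G) \<subseteq> S" for k
    using funpow_image_subset[OF assms(3)] assms(5) by blast
  show "compact (closure (\<Union>n\<in>{k..}. (f ^^ n) ` G))" for k
    using bounded_subset[OF assms(1) orbit_subset] by (simp add: compact_closure)
  show "connected (closure (\<Union>n\<in>{k..}. (f ^^ n) ` G))" for k
  proof (intro connected_imp_connected_closure connected_Union)
    show "connected T" if "T \<in> (\<lambda>n. (f ^^ n) ` G) ` {k..}" for T
      using that assms(4,5) continuous_on_funpow[OF assms(2,3)]
      by (auto intro: connected_continuous_image continuous_on_subset)
    show "\<Inter> ((\<lambda>n. (f ^^ n) ` G) ` {k..}) \<noteq> {}"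
      using assms(6) funpow_fixpoint[of f a, OF assms(7)] by (metis (no_types, lifting) INT_I empty_iff image_eqI)
  qed
  show "closure (\<Union>n\<in>{k'..}. (f ^^ n) ` G) \<subseteq> closure (\<Union>n\<in>{k..}. (f ^^ n) ` G)" if "k \<le> k'" for k k'
    using that by (intro closure_mono UN_mono) auto
qed

lemma omega_limit_subset_superlevel_set:
  fixes f :: "'a::t2_space \<Rightarrow> 'a" and \<phi> :: "'a \<Rightarrow> real"
  assumes "compact S" "continuous_on S f" "f ` S \<subseteq> S" "continuous_on S \<phi>"
    and mono: "\<And>p. p \<in> S \<Longrightarrow> \<phi> p \<le> \<phi> (f p)"
    and strict: "\<And>p. p \<in> S \<Longrightarrow> \<epsilon> \<le> \<phi> p \<Longrightarrow> \<phi> p < r \<Longrightarrow> \<phi> p < \<phi> (f p)"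
    and G: "G \<subseteq> S" "\<And>g. g \<in> G \<Longrightarrow> \<epsilon> \<le> \<phi> g"
  shows "omega_limit f G \<subseteq> {p \<in> S. r \<le> \<phi> p}"
proof -
  have below: "omega_limit f G \<subseteq> {p \<in> S. b \<le> \<phi> p}" if b: "b < r" for b
  proof -
    obtain N where N: "\<And>n p. N \<le> n \<Longrightarrow> p \<in> S \<Longrightarrow> \<epsilon> \<le> \<phi> p \<Longrightarrow> b \<le> \<phi> ((f ^^ n) p)"
      using funpow_eventually_ge_if_increasing[OF assms(1-4) mono strict b] by blast
    show ?thesis
    proof (rule omega_limit_subset_closed[of _ N])
      show "closed {p \<in> S. b \<le> \<phi> p}"
        using continuous_closed_preimage[OF assms(4) compact_imp_closed[OF assms(1)], of "{b..}"]
        by (simp add: vimage_def Int_def)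
      fix n g assume "N \<le> n" "g \<in> G"
      then show "(f ^^ n) g \<in> {p \<in> S. b \<le> \<phi> p}"
        using N G funpow_image_subset[OF assms(3), of n] by blast
    qed
  qed
  show ?thesis
  proof (intro subsetI CollectI conjI)
    fix x assume x: "x \<in> omega_limit f G"
    then show "x \<in> S"
      using below[of "r - 1"] by auto
    show "r \<le> \<phi> x"
    proof (rule dense_le)
      fix b assume "b < r"
      then show "b \<le> \<phi> x"
        using subsetD[OF below x] by simp
    qed
  qed
qed

lemma connected_superlevel_set_if_increasing:
  fixes f :: "'a::euclidean_space \<Rightarrow> 'a" and \<phi> :: "'a \<Rightarrow> real"
  assumes "compact S" "continuous_on S f" "f ` S \<subseteq> S" "continuous_on S \<phi>"
    and fixed: "\<And>p. p \<in> S \<Longrightarrow> r \<le> \<phi> p \<Longrightarrow> f p = p"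
    and mono: "\<And>p. p \<in> S \<Longrightarrow> \<phi> p \<le> \<phi> (f p)"
    and strict: "\<And>p. p \<in> S \<Longrightarrow> \<epsilon> \<le> \<phi> p \<Longrightarrow> \<phi> p < r \<Longrightarrow> \<phi> p < \<phi> (f p)"
    and G: "connected G" "G \<subseteq> S" "{p \<in> S. r \<le> \<phi> p} \<subseteq> G" "\<And>g. g \<in> G \<Longrightarrow> \<epsilon> \<le> \<phi> g"
  shows "connected {p \<in> S. r \<le> \<phi> p}"
proof (cases "{p \<in> S. r \<le> \<phi> p} = {}")
  case False
  then obtain a where a: "a \<in> S" "r \<le> \<phi> a"
    by blast
  have "omega_limit f G = {p \<in> S. r \<le> \<phi> p}"
  proof
    show "omega_limit f G \<subseteq> {p \<in> S. r \<le> \<phi> p}"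
      by (rule omega_limit_subset_superlevel_set[OF assms(1-4) mono strict G(2,4)])
    show "{p \<in> S. r \<le> \<phi> p} \<subseteq> omega_limit f G"
      using G(3) fixed by (intro fixpoints_subset_omega_limit) auto
  qed
  moreover have "connected (omega_limit f G)"
    using assms(1-3) G(1,2,3) a fixed
    by (intro connected_omega_limit[of S _ _ a]) (auto intro: compact_imp_bounded)
  ultimately show ?thesis
    by simp
qed (simp only: connected_empty)

lemma dist_outward_point:
  fixes p O0 :: "'a::real_normed_vector"
  shows "dist (p + (p - O0)) O0 = 2 * dist p O0" and "dist (p + (p - O0)) p = dist p O0"
proof -
  have "p + (p - O0) - O0 = 2 *\<^sub>R (p - O0)"
    by (simp add: scaleR_2 algebra_simps)
  then show "dist (p + (p - O0)) O0 = 2 * dist p O0" "dist (p + (p - O0)) p = dist p O0"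
    by (simp_all add: dist_norm)
qed

lemma dist_closest_point_outward:
  fixes S :: "'a::euclidean_space set"
  assumes "convex S" "closed S" "p \<in> S"
  shows "dist p O0 \<le> dist (closest_point S (p + (p - O0))) O0"
    and "closest_point S (p + (p - O0)) \<noteq> p \<Longrightarrow> dist p O0 < dist (closest_point S (p + (p - O0))) O0"
proof -
  define y where "y = p + (p - O0)"
  define q where "q = closest_point S y"
  have "dist y O0 = 2 * dist p O0" "dist y p = dist p O0"
    unfolding y_def by (rule dist_outward_point)+
  moreover have "dist y O0 \<le> dist y q + dist q O0"
    by (rule dist_triangle)
  moreover have "dist y q \<le> dist y p"
    using closest_point_le[OF assms(2,3)] by (simp add: q_def)
  moreover have "q \<noteq> p \<Longrightarrow> dist y q < dist y p"
    using closest_point_lt[OF assms] by (simp add: q_def)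
  ultimately show "dist p O0 \<le> dist q O0" "q \<noteq> p \<Longrightarrow> dist p O0 < dist q O0"
    by linarith+
qed

lemma closest_point_outward_eq_imp_supporting:
  fixes S :: "'a::euclidean_space set"
  assumes "convex S" "closed S" "closest_point S (p + (p - O0)) = p" "X \<in> S"
  shows "0 \<le> inner (O0 - p) (X - p)"
  using closest_point_dot[OF assms(1,2,4), of "p + (p - O0)"] assms(3)
  by (simp add: inner_diff_left inner_diff_right)

lemma supporting_cball_Int_imp_supporting:
  fixes K :: "'a::euclidean_space set"
  assumes "convex K" "p \<in> K" "dist p O0 < r"
    and supp: "\<And>Y. Y \<in> K \<inter> cball O0 r \<Longrightarrow> 0 \<le> inner (O0 - p) (Y - p)"
    and "X \<in> K"
  shows "0 \<le> inner (O0 - p) (X - p)"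
proof (cases "X = p")
  case False
  define t where "t = min 1 ((r - dist p O0) / norm (X - p))"
  have t: "0 < t" "t \<le> 1" "t * norm (X - p) \<le> r - dist p O0"
  proof -
    show "0 < t" "t \<le> 1"
      using False assms(3) by (auto simp: t_def)
    have "t \<le> (r - dist p O0) / norm (X - p)"
      by (simp add: t_def)
    then show "t * norm (X - p) \<le> r - dist p O0"
      using False by (simp add: le_divide_eq)
  qed
  define Y where "Y = p + t *\<^sub>R (X - p)"
  have "Y \<in> K"
    using convex_mem_towards[OF assms(1,2,5)] t by (simp add: Y_def)
  moreover have "dist Y O0 \<le> r"
    using dist_triangle[of Y O0 p] t by (simp add: Y_def dist_norm)
  ultimately have "0 \<le> inner (O0 - p) (Y - p)"
    using supp by (simp add: dist_commute)
  then show ?thesis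
    using t(1) by (simp add: Y_def zero_le_mult_iff)
qed simp

lemma critical_point_iff_supporting:
  fixes K :: "'a::euclidean_space set"
  assumes "P \<in> K" "P \<noteq> O0"
  shows "critical_point K O0 P \<longleftrightarrow> (\<forall>X\<in>K. 0 \<le> inner (O0 - P) (X - P))"
proof -
  have "P \<notin> interior K" if supp: "\<forall>X\<in>K. 0 \<le> inner (O0 - P) (X - P)"
  proof
    assume "P \<in> interior K"
    then obtain e where "0 < e" "ball P e \<subseteq> K"
      by (meson mem_interior)
    define X where "X = P + (e / (2 * norm (P - O0))) *\<^sub>R (P - O0)"
    have "X \<in> K"
      using \<open>0 < e\<close> \<open>ball P e \<subseteq> K\<close> assms(2) by (auto simp: X_def dist_norm)
    moreover have "inner (O0 - P) (X - P) = - (e / (2 * norm (P - O0))) * (norm (P - O0))\<^sup>2"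
      using inner_minus_left[of "P - O0" "P - O0"] by (simp add: X_def power2_norm_eq_inner)
    moreover have "0 < (e / (2 * norm (P - O0))) * (norm (P - O0))\<^sup>2"
      using \<open>0 < e\<close> assms(2) by simp
    ultimately show False
      using supp by fastforce
  qed
  then show ?thesis
    using assms closure_subset by (auto simp: critical_point_def frontier_def)
qed

lemma closest_point_outward_sphere:
  fixes S :: "'a::euclidean_space set"
  assumes "convex S" "closed S" "S \<subseteq> cball O0 r" "p \<in> S" "dist p O0 = r"
  shows "closest_point S (p + (p - O0)) = p"
proof -
  have "dist (p + (p - O0)) p \<le> dist (p + (p - O0)) z" if "z \<in> S" for z
  proof -
    have "dist z O0 \<le> r"
      using that assms(3) by (auto simp: dist_commute)
    then show ?thesis
      using dist_triangle[of "p + (p - O0)" O0 z] dist_outward_point[of p O0] assms(5) by linarith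
  qed
  then show ?thesis
    using closest_point_unique[OF assms(1,2,4)] by simp
qed

lemma closest_point_outward_eq_imp_critical:
  fixes K :: "'a::euclidean_space set"
  assumes "closed K" "convex K" "p \<in> K" "0 < dist p O0" "dist p O0 < r"
    and "closest_point (K \<inter> cball O0 r) (p + (p - O0)) = p"
  shows "critical_point K O0 p"
proof -
  have "0 \<le> inner (O0 - p) (X - p)" if "X \<in> K \<inter> cball O0 r" for X
    using closest_point_outward_eq_imp_supporting[OF _ _ assms(6) that] assms(1,2)
    by (simp add: convex_Int closed_Int_compact compact_imp_closed)
  then have "\<forall>X\<in>K. 0 \<le> inner (O0 - p) (X - p)"
    using supporting_cball_Int_imp_supporting[OF assms(2,3,5)] by blast
  then show ?thesis
    using assms(3,4) by (simp add: critical_point_iff_supporting)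
qed

lemma connected_sphere_Int_below_critical_distance:
  fixes K :: "'a::euclidean_space set"
  assumes "closed K" "convex K" "aff_dim K \<ge> 2" "O0 \<in> K" "0 < r"
    and no_critical: "\<And>P. critical_point K O0 P \<Longrightarrow> r \<le> dist O0 P"
  shows "connected (sphere O0 r \<inter> K)"
proof -
  define B where "B = K \<inter> cball O0 r"
  define f where "f p = closest_point B (p + (p - O0))" for p
  have B: "convex B" "closed B" "compact B" "B \<noteq> {}"
    using assms(1,2,4,5) by (auto simp: B_def convex_Int closed_Int_compact)
  obtain G \<epsilon> where G: "connected G" "G \<subseteq> B" "K \<inter> sphere O0 r \<subseteq> G"
    and \<epsilon>: "0 < \<epsilon>" "\<And>g. g \<in> G \<Longrightarrow> \<epsilon> \<le> dist g O0"
    using convex_obtain_connected_cover_of_sphere_Int[OF assms(2,4,3,5)] unfolding B_def by blast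
  have "connected {p \<in> B. r \<le> dist p O0}"
  proof (rule connected_superlevel_set_if_increasing[where f = f and \<epsilon> = \<epsilon>])
    show "continuous_on B f"
      unfolding f_def
      by (intro continuous_on_compose2[OF continuous_on_closest_point[OF B(1,2,4)]] continuous_intros) auto
    show "f ` B \<subseteq> B"
      using closest_point_in_set[OF B(2,4)] by (auto simp: f_def)
    show "f p = p" if "p \<in> B" "r \<le> dist p O0" for p
      using closest_point_outward_sphere[OF B(1,2) _ that(1)] that by (auto simp: f_def B_def dist_commute)
    show "dist p O0 \<le> dist (f p) O0" if "p \<in> B" for p
      using dist_closest_point_outward(1)[OF B(1,2) that] by (simp add: f_def)
    show "dist p O0 < dist (f p) O0" if "p \<in> B" "\<epsilon> \<le> dist p O0" "dist p O0 < r" for p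
      unfolding f_def
    proof (rule dist_closest_point_outward(2)[OF B(1,2) that(1)], rule notI)
      assume "closest_point B (p + (p - O0)) = p"
      moreover have "p \<in> K" "0 < dist p O0"
        using that \<epsilon>(1) by (auto simp: B_def)
      ultimately have "critical_point K O0 p"
        using closest_point_outward_eq_imp_critical[OF assms(1,2) _ _ that(3)] by (simp add: B_def)
      then show False
        using no_critical \<open>dist p O0 < r\<close> by (metis dist_commute not_le)
    qed
    show "continuous_on B (\<lambda>p. dist p O0)"
      by (intro continuous_intros)
    show "{p \<in> B. r \<le> dist p O0} \<subseteq> G"
      using G(3) by (auto simp: B_def dist_commute)
  qed (use B(3) G \<epsilon> in simp_all)
  moreover have "{p \<in> B. r \<le> dist p O0} = sphere O0 r \<inter> K"
    by (auto simp: B_def dist_commute)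
  ultimately show ?thesis
    by simp
qed

lemma conn_radius_ge:
  assumes "\<And>r. 0 < r \<Longrightarrow> ereal r < L \<Longrightarrow> connected (sphere O0 r \<inter> K)"
  shows "L \<le> conn_radius K O0"
  unfolding conn_radius_def le_Sup_iff
proof (intro allI impI)
  fix y assume "y < L"
  then obtain z where z: "y < ereal z" "ereal z < L"
    using ereal_dense2 by blast
  have "\<forall>r. 0 < r \<and> r < z \<longrightarrow> connected (sphere O0 r \<inter> K)"
  proof (intro allI impI)
    fix r assume r: "0 < r \<and> r < z"
    then have "ereal r < L"
      using z(2) by (simp add: less_trans[of "ereal r" "ereal z"])
    with r show "connected (sphere O0 r \<inter> K)"
      using assms by blast
  qed
  with z(1) show "\<exists>a\<in>{ereal \<epsilon> |\<epsilon>. \<forall>r. 0 < r \<and> r < \<epsilon> \<longrightarrow> connected (sphere O0 r \<inter> K)}. y < a"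
    by blast
qed

theorem mainTheorem1:
  fixes K :: "'a::euclidean_space set" and O0 :: 'a
  assumes "closed K" and "convex K" and "aff_dim K \<ge> 2" and "O0 \<in> frontier K"
  shows "conn_radius K O0 \<ge> least_crit_dist K O0"
proof (rule conn_radius_ge)
  fix r assume "0 < r" and below_lcd: "ereal r < least_crit_dist K O0"
  have "O0 \<in> K"
    using assms(1,4) frontier_subset_closed by blast
  then show "connected (sphere O0 r \<inter> K)"
  proof (rule connected_sphere_Int_below_critical_distance[OF assms(1-3) _ \<open>0 < r\<close>])
    fix P assume "critical_point K O0 P"
    then have "least_crit_dist K O0 \<le> ereal (dist O0 P)"
      unfolding least_crit_dist_def by (intro Inf_lower) auto
    with below_lcd show "r \<le> dist O0 P"
      by (metis ereal_less_eq(3) less_le_trans order_less_imp_le)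
  qed
qed

end
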